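(* Let $X$ be a $T_1$ topological space. The following are equivalent: (i) $X$ is finite; (ii) every proper ideal of $C_c(X)_F$ (respectively of $C_c^*(X)_F$) is fixed; (iii) every maximal ideal of $C_c(X)_F$ (respectively of $C_c^*(X)_F$) is fixed; (iv) every $(\mathcal{Z}_c)_F$-filter on $X$ is fixed; (v) every $(\mathcal{Z}_c)_F$-ultrafilter on $X$ is fixed.
   Context: $C_c(X)_F$ denotes the set of all functions $f:X\to\mathbb{R}$ whose range $f(X)$ is countable and whose set of points of discontinuity is finite; $C_c^*(X)_F$ is its subring of bounded functions. $Z(f)=\{x:f(x)=0\}$ and $Z[C_c(X)_F]=\{Z(f):f\in C_c(X)_F\}$. An ideal $I$ is fixed if $\bigcap_{f\in I}Z(f)\neq\emptyset$. A $(\mathcal{Z}_c)_F$-filter on $X$ is a nonempty family $\mathcal{F}\subseteq Z[C_c(X)_F]$ with $\emptyset\notin\mathcal{F}$, closed under finite intersections, and such that $Z\in\mathcal{F}$, $Z'\in Z[C_c(X)_F]$, $Z\subseteq Z'$ imply $Z'\in\mathcal{F}$; a $(\mathcal{Z}_c)_F$-ultrafilter is a maximal $(\mathcal{Z}_c)_F$-filter. A filter $\mathcal{F}$ is fixed if $\bigcap\mathcal{F}\neq\emptyset$. *)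

theory Defs
  imports "HOL-Analysis.Analysis" "HOL-Algebra.Ideal"
begin

text \<open>Functions X \<rightarrow> R are represented as functions on the whole type that vanish
  outside the carrier topspace X (so that each function on X has exactly one representative).\<close>

definition continuous_at_pt :: "'a topology \<Rightarrow> ('a \<Rightarrow> real) \<Rightarrow> 'a \<Rightarrow> bool" where
  "continuous_at_pt X f x \<longleftrightarrow>
     (\<forall>V. open V \<and> f x \<in> V \<longrightarrow> (\<exists>U. openin X U \<and> x \<in> U \<and> f ` U \<subseteq> V))"

definition discont_set :: "'a topology \<Rightarrow> ('a \<Rightarrow> real) \<Rightarrow> 'a set" where
  "discont_set X f = {x \<in> topspace X. \<not> continuous_at_pt X f x}"

definition CcF :: "'a topology \<Rightarrow> ('a \<Rightarrow> real) set" where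
  "CcF X = {f. (\<forall>x. x \<notin> topspace X \<longrightarrow> f x = 0) \<and> countable (f ` topspace X)
               \<and> finite (discont_set X f)}"

definition CcF_bdd :: "'a topology \<Rightarrow> ('a \<Rightarrow> real) set" where
  "CcF_bdd X = {f \<in> CcF X. \<exists>M. \<forall>x \<in> topspace X. \<bar>f x\<bar> \<le> M}"

definition fun_ring :: "'a topology \<Rightarrow> ('a \<Rightarrow> real) set \<Rightarrow> ('a \<Rightarrow> real) ring" where
  "fun_ring X S = \<lparr> carrier = S,
      monoid.mult = (\<lambda>f g x. f x * g x),
      one = (\<lambda>x. if x \<in> topspace X then 1 else 0),
      zero = (\<lambda>x. 0),
      add = (\<lambda>f g x. f x + g x) \<rparr>"

definition Zset :: "'a topology \<Rightarrow> ('a \<Rightarrow> real) \<Rightarrow> 'a set" where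
  "Zset X f = {x \<in> topspace X. f x = 0}"

definition fixed_ideal :: "'a topology \<Rightarrow> ('a \<Rightarrow> real) set \<Rightarrow> bool" where
  "fixed_ideal X I \<longleftrightarrow> (\<Inter>f\<in>I. Zset X f) \<noteq> {}"

definition ZCcF :: "'a topology \<Rightarrow> 'a set set" where
  "ZCcF X = Zset X ` CcF X"

definition ZcF_filter :: "'a topology \<Rightarrow> 'a set set \<Rightarrow> bool" where
  "ZcF_filter X \<F> \<longleftrightarrow> \<F> \<noteq> {} \<and> \<F> \<subseteq> ZCcF X \<and> {} \<notin> \<F>
     \<and> (\<forall>A\<in>\<F>. \<forall>B\<in>\<F>. A \<inter> B \<in> \<F>)
     \<and> (\<forall>A\<in>\<F>. \<forall>B\<in>ZCcF X. A \<subseteq> B \<longrightarrow> B \<in> \<F>)"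

definition ZcF_ultrafilter :: "'a topology \<Rightarrow> 'a set set \<Rightarrow> bool" where
  "ZcF_ultrafilter X \<F> \<longleftrightarrow> ZcF_filter X \<F> \<and> (\<forall>\<G>. ZcF_filter X \<G> \<and> \<F> \<subseteq> \<G> \<longrightarrow> \<G> = \<F>)"

definition fixed_filter :: "'a set set \<Rightarrow> bool" where
  "fixed_filter \<F> \<longleftrightarrow> \<Inter>\<F> \<noteq> {}"

end

theory Submission
  imports Defs "HOL-Algebra.Ring_Divisibility"
begin

text \<open>If the space is finite, every real function on it belongs to both rings, so an ideal
  without a common zero contains the everywhere positive sum of squares of finitely many of its
  elements, which is a unit; likewise a filter of subsets of a finite set contains the
  intersection of all its members. If the space is infinite, the finitely supported functions
  form a proper ideal (they lie in the rings because points are closed) and the cofinite zero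
  sets form a filter; neither is fixed, because for every point \<open>a\<close> the indicator of \<open>{a}\<close> has
  zero set \<open>X - {a}\<close>. By Zorn's lemma they extend to a maximal ideal and an
  ultrafilter, which are not fixed either.\<close>

lemma continuous_at_pt_iff_tendsto:
  assumes "x \<in> topspace X"
  shows "continuous_at_pt X f x \<longleftrightarrow> (f \<longlongrightarrow> f x) (nhdsin X x)"
  unfolding continuous_at_pt_def tendsto_def eventually_nhdsin image_subset_iff
  using assms by auto

lemma CcF_combine:
  fixes op :: "real \<Rightarrow> real \<Rightarrow> real" and f g :: "'a \<Rightarrow> real"
  assumes f: "f \<in> CcF X" and g: "g \<in> CcF X" and op_0: "op 0 0 = 0"
    and op_tendsto: "\<And>F (h :: 'a \<Rightarrow> real) k a b. (h \<longlongrightarrow> a) F \<Longrightarrow> (k \<longlongrightarrow> b) F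
                        \<Longrightarrow> ((\<lambda>y. op (h y) (k y)) \<longlongrightarrow> op a b) F"
  shows "(\<lambda>x. op (f x) (g x)) \<in> CcF X"
proof -
  let ?h = "\<lambda>x. op (f x) (g x)"
  have "?h ` topspace X \<subseteq> case_prod op ` (f ` topspace X \<times> g ` topspace X)"
    by auto
  moreover have "countable (case_prod op ` (f ` topspace X \<times> g ` topspace X))"
    using f g unfolding CcF_def by auto
  ultimately have "countable (?h ` topspace X)"
    by (rule countable_subset)
  moreover have "continuous_at_pt X ?h x"
    if "x \<in> topspace X" "continuous_at_pt X f x" "continuous_at_pt X g x" for x
    using that op_tendsto[of f "f x" "nhdsin X x" g "g x"]
    by (simp add: continuous_at_pt_iff_tendsto)
  then have "discont_set X ?h \<subseteq> discont_set X f \<union> discont_set X g"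
    unfolding discont_set_def by blast
  ultimately show ?thesis
    using f g op_0 unfolding CcF_def by (auto intro: finite_subset)
qed

lemma CcF_add: "f \<in> CcF X \<Longrightarrow> g \<in> CcF X \<Longrightarrow> (\<lambda>x. f x + g x) \<in> CcF X"
  by (rule CcF_combine) (auto intro: tendsto_add)

lemma CcF_mult: "f \<in> CcF X \<Longrightarrow> g \<in> CcF X \<Longrightarrow> (\<lambda>x. f x * g x) \<in> CcF X"
  by (rule CcF_combine) (auto intro: tendsto_mult)

lemma CcF_uminus: "f \<in> CcF X \<Longrightarrow> (\<lambda>x. - f x) \<in> CcF X"
  by (rule CcF_combine[where op = "\<lambda>a b. - a" and g = f, simplified]) (auto intro: tendsto_minus)

lemma CcF_const: "(\<lambda>x. if x \<in> topspace X then c else 0) \<in> CcF X"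
proof -
  have "(\<lambda>x. if x \<in> topspace X then c else 0) ` topspace X \<subseteq> {c}"
    by auto
  moreover have "discont_set X (\<lambda>x. if x \<in> topspace X then c else 0) = {}"
    unfolding discont_set_def continuous_at_pt_def by (fastforce intro: openin_topspace)
  ultimately show ?thesis
    unfolding CcF_def by (auto intro: countable_subset)
qed

lemma CcF_zero: "(\<lambda>x. 0) \<in> CcF X"
  using CcF_const[of X 0] by simp

lemma CcF_bdd_iff: "f \<in> CcF_bdd X \<longleftrightarrow> f \<in> CcF X \<and> bounded (f ` topspace X)"
  unfolding CcF_bdd_def bounded_real by auto

lemma bounded_mult_comp:
  fixes f g :: "'a \<Rightarrow> real"
  assumes "bounded (f ` S)" "bounded (g ` S)"
  shows "bounded ((\<lambda>x. f x * g x) ` S)"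
proof -
  obtain M N where "\<forall>x\<in>S. \<bar>f x\<bar> \<le> M" "\<forall>x\<in>S. \<bar>g x\<bar> \<le> N"
    using assms unfolding bounded_real by auto
  then have "\<forall>x\<in>S. \<bar>f x * g x\<bar> \<le> M * N"
    unfolding abs_mult by (metis abs_ge_zero mult_mono order_trans)
  then show ?thesis
    unfolding bounded_real by auto
qed

lemma CcF_bdd_add: "f \<in> CcF_bdd X \<Longrightarrow> g \<in> CcF_bdd X \<Longrightarrow> (\<lambda>x. f x + g x) \<in> CcF_bdd X"
  by (simp add: CcF_bdd_iff CcF_add bounded_plus_comp)

lemma CcF_bdd_mult: "f \<in> CcF_bdd X \<Longrightarrow> g \<in> CcF_bdd X \<Longrightarrow> (\<lambda>x. f x * g x) \<in> CcF_bdd X"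
  by (simp add: CcF_bdd_iff CcF_mult bounded_mult_comp)

lemma CcF_bdd_uminus: "f \<in> CcF_bdd X \<Longrightarrow> (\<lambda>x. - f x) \<in> CcF_bdd X"
  by (simp add: CcF_bdd_iff CcF_uminus)

lemma CcF_bdd_const: "(\<lambda>x. if x \<in> topspace X then c else 0) \<in> CcF_bdd X"
  using CcF_const[of X c] unfolding CcF_bdd_def by (auto intro!: exI[of _ "\<bar>c\<bar>"])

lemma CcF_bdd_subset_CcF: "CcF_bdd X \<subseteq> CcF X"
  unfolding CcF_bdd_def by auto

lemma CcF_bdd_if_finite:
  assumes "finite (topspace X)" "\<forall>x. x \<notin> topspace X \<longrightarrow> f x = 0"
  shows "f \<in> CcF_bdd X"
proof -
  have "finite (discont_set X f)"
    using assms(1) unfolding discont_set_def by simp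
  then show ?thesis
    using assms by (simp add: CcF_bdd_iff CcF_def countable_finite finite_imp_bounded)
qed

lemma fun_ring_simps [simp]:
  "carrier (fun_ring X S) = S"
  "mult (fun_ring X S) = (\<lambda>f g x. f x * g x)"
  "one (fun_ring X S) = (\<lambda>x. if x \<in> topspace X then 1 else 0)"
  "zero (fun_ring X S) = (\<lambda>x. 0)"
  "add (fun_ring X S) = (\<lambda>f g x. f x + g x)"
  by (simp_all add: fun_ring_def)

lemma ring_fun_ring:
  assumes vanish: "\<And>f x. f \<in> S \<Longrightarrow> x \<notin> topspace X \<Longrightarrow> f x = 0"
    and add: "\<And>f g. f \<in> S \<Longrightarrow> g \<in> S \<Longrightarrow> (\<lambda>x. f x + g x) \<in> S"
    and mult: "\<And>f g. f \<in> S \<Longrightarrow> g \<in> S \<Longrightarrow> (\<lambda>x. f x * g x) \<in> S"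
    and uminus: "\<And>f. f \<in> S \<Longrightarrow> (\<lambda>x. - f x) \<in> S"
    and zero: "(\<lambda>x. 0) \<in> S"
    and one: "(\<lambda>x. if x \<in> topspace X then 1 else 0) \<in> S"
  shows "ring (fun_ring X S)"
proof (rule ringI)
  show "abelian_group (fun_ring X S)"
  proof (rule abelian_groupI)
    fix f assume "f \<in> carrier (fun_ring X S)"
    then show "\<exists>g\<in>carrier (fun_ring X S). g \<oplus>\<^bsub>fun_ring X S\<^esub> f = \<zero>\<^bsub>fun_ring X S\<^esub>"
      using uminus by (intro bexI[of _ "\<lambda>x. - f x"]) auto
  qed (auto simp: add zero algebra_simps)
  show "monoid (fun_ring X S)"
  proof (rule monoidI)
    fix f assume "f \<in> carrier (fun_ring X S)"
    then show "\<one>\<^bsub>fun_ring X S\<^esub> \<otimes>\<^bsub>fun_ring X S\<^esub> f = f"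
      "f \<otimes>\<^bsub>fun_ring X S\<^esub> \<one>\<^bsub>fun_ring X S\<^esub> = f"
      using vanish by (auto simp: fun_eq_iff)
  qed (auto simp: mult one algebra_simps)
qed (auto simp: algebra_simps)

lemma ring_CcF: "ring (fun_ring X (CcF X))"
  by (rule ring_fun_ring)
    (auto simp: CcF_add CcF_mult CcF_uminus CcF_zero CcF_const[of X 1, simplified],
     auto simp: CcF_def)

lemma ring_CcF_bdd: "ring (fun_ring X (CcF_bdd X))"
proof (rule ring_fun_ring)
  show "f x = 0" if "f \<in> CcF_bdd X" "x \<notin> topspace X" for f x
    using that unfolding CcF_bdd_def CcF_def by simp
  show "(\<lambda>x. 0) \<in> CcF_bdd X"
    using CcF_bdd_const[of X 0] by simp
qed (simp_all add: CcF_bdd_add CcF_bdd_mult CcF_bdd_uminus CcF_bdd_const)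

lemma fun_ring_ideal_zero: "ideal I (fun_ring X S) \<Longrightarrow> (\<lambda>x. 0) \<in> I"
  using additive_subgroup.zero_closed[OF ideal.axioms(1)] by fastforce

lemma fun_ring_ideal_add:
  "ideal I (fun_ring X S) \<Longrightarrow> f \<in> I \<Longrightarrow> g \<in> I \<Longrightarrow> (\<lambda>x. f x + g x) \<in> I"
  using additive_subgroup.a_closed[OF ideal.axioms(1)] by fastforce

lemma fun_ring_ideal_mult:
  "ideal I (fun_ring X S) \<Longrightarrow> f \<in> I \<Longrightarrow> h \<in> S \<Longrightarrow> (\<lambda>x. h x * f x) \<in> I"
  using ideal.I_l_closed by fastforce

lemma fun_ring_ideal_subset: "ideal I (fun_ring X S) \<Longrightarrow> I \<subseteq> S"
  using additive_subgroup.a_subset[OF ideal.axioms(1)] by fastforce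

lemma not_fixed_ideal_positive_on_finite:
  assumes I: "ideal I (fun_ring X S)" and not_fixed: "\<not> fixed_ideal X I"
    and "finite A" "A \<subseteq> topspace X"
  shows "\<exists>g\<in>I. (\<forall>x. 0 \<le> g x) \<and> (\<forall>x\<in>A. 0 < g x)"
  using \<open>finite A\<close> \<open>A \<subseteq> topspace X\<close>
proof (induction A rule: finite_induct)
  case empty
  show ?case
    using fun_ring_ideal_zero[OF I] by auto
next
  case (insert a A)
  then obtain g where g: "g \<in> I" "\<forall>x. 0 \<le> g x" "\<forall>x\<in>A. 0 < g x"
    by auto
  have "a \<notin> (\<Inter>f\<in>I. Zset X f)"
    using not_fixed unfolding fixed_ideal_def by blast
  then obtain f where f: "f \<in> I" "f a \<noteq> 0"
    using insert.prems unfolding Zset_def by blast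
  have "(\<lambda>x. f x * f x) \<in> I"
    using fun_ring_ideal_mult[OF I f(1)] fun_ring_ideal_subset[OF I] f(1) by blast
  then have "(\<lambda>x. g x + f x * f x) \<in> I"
    by (rule fun_ring_ideal_add[OF I g(1)])
  moreover have "0 < g a + f a * f a"
    using g(2)[rule_format, of a] f(2) by (metis add_nonneg_pos not_real_square_gt_zero)
  ultimately show ?case
    using g(2,3) by (intro bexI[of _ "\<lambda>x. g x + f x * f x"]) (auto simp: add_pos_nonneg)
qed

lemma proper_ideal_fixed_if_finite:
  assumes fin: "finite (topspace X)"
    and all_funs: "\<And>f. \<forall>x. x \<notin> topspace X \<longrightarrow> f x = 0 \<Longrightarrow> f \<in> S"
    and I: "ideal I (fun_ring X S)" and proper: "I \<noteq> S"
  shows "fixed_ideal X I"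
proof (rule ccontr)
  assume "\<not> fixed_ideal X I"
  then obtain g where g: "g \<in> I" "\<forall>x\<in>topspace X. 0 < g x"
    using not_fixed_ideal_positive_on_finite[OF I _ fin] by blast
  define h where "h x = (if x \<in> topspace X then 1 / g x else 0)" for x
  have "(\<lambda>x. h x * g x) \<in> I"
    by (rule fun_ring_ideal_mult[OF I g(1) all_funs]) (simp add: h_def)
  moreover have "(\<lambda>x. h x * g x) = \<one>\<^bsub>fun_ring X S\<^esub>"
    using g(2) by (auto simp: h_def fun_eq_iff)
  ultimately have "I = carrier (fun_ring X S)"
    using ideal.one_imp_carrier[OF I] by simp
  then show False
    using proper by simp
qed

definition finsupp_funs :: "'a topology \<Rightarrow> ('a \<Rightarrow> real) set" where
  "finsupp_funs X = {f. {x. f x \<noteq> 0} \<subseteq> topspace X \<and> finite {x. f x \<noteq> 0}}"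

lemma indicator_singleton_finsupp_funs:
  assumes "a \<in> topspace X" shows "indicator {a} \<in> finsupp_funs X"
proof -
  have "{x. indicator {a} x \<noteq> (0::real)} = {a}"
    by (simp add: indicator_def)
  then show ?thesis
    using assms unfolding finsupp_funs_def by simp
qed
lemma finsupp_funs_subset_CcF_bdd:
  assumes "t1_space X"
  shows "finsupp_funs X \<subseteq> CcF_bdd X"
proof
  fix f assume f: "f \<in> finsupp_funs X"
  let ?supp = "{x. f x \<noteq> 0}"
  have supp: "finite ?supp" "?supp \<subseteq> topspace X"
    using f unfolding finsupp_funs_def by auto
  have "openin X (topspace X - ?supp)"
    using assms supp unfolding t1_space_closedin_finite by blast
  then have "continuous_at_pt X f y" if "y \<in> topspace X - ?supp" for y
    using that unfolding continuous_at_pt_def by (intro allI impI exI[of _ "topspace X - ?supp"]) auto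
  then have "discont_set X f \<subseteq> ?supp"
    unfolding discont_set_def by blast
  then have "finite (discont_set X f)"
    using supp(1) by (rule finite_subset)
  moreover have "f ` topspace X \<subseteq> insert 0 (f ` ?supp)"
    by auto
  then have "finite (f ` topspace X)"
    using supp(1) by (simp add: finite_subset)
  ultimately show "f \<in> CcF_bdd X"
    using supp(2) by (auto simp: CcF_bdd_iff CcF_def countable_finite finite_imp_bounded)
qed

lemma a_inv_fun_ring:
  assumes "ring (fun_ring X S)" "f \<in> S" "(\<lambda>x. - f x) \<in> S"
  shows "\<ominus>\<^bsub>fun_ring X S\<^esub> f = (\<lambda>x. - f x)"
  by (rule abelian_group.minus_equality[OF ring.is_abelian_group[OF assms(1)]])
    (use assms in simp_all)

lemma finsupp_funs_ideal:
  assumes R: "ring (fun_ring X S)" and sub: "finsupp_funs X \<subseteq> S"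
  shows "ideal (finsupp_funs X) (fun_ring X S)"
proof (rule idealI[OF R])
  have uminus: "(\<lambda>x. - f x) \<in> finsupp_funs X" if "f \<in> finsupp_funs X" for f
    using that unfolding finsupp_funs_def by auto
  show "subgroup (finsupp_funs X) (add_monoid (fun_ring X S))"
  proof (rule group.subgroupI[OF abelian_group.a_group[OF ring.is_abelian_group[OF R]]])
    show "finsupp_funs X \<noteq> {}"
      unfolding finsupp_funs_def by auto
    fix f g assume f: "f \<in> finsupp_funs X" and g: "g \<in> finsupp_funs X"
    have "{x. f x + g x \<noteq> 0} \<subseteq> {x. f x \<noteq> 0} \<union> {x. g x \<noteq> 0}"
      by auto
    then show "f \<otimes>\<^bsub>add_monoid (fun_ring X S)\<^esub> g \<in> finsupp_funs X"
      using f g unfolding finsupp_funs_def by (auto intro: finite_subset)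
    have "inv\<^bsub>add_monoid (fun_ring X S)\<^esub> f = (\<lambda>x. - f x)"
      using a_inv_fun_ring[OF R, of f] f sub uminus[OF f] unfolding a_inv_def by blast
    then show "inv\<^bsub>add_monoid (fun_ring X S)\<^esub> f \<in> finsupp_funs X"
      using uminus[OF f] by simp
  qed (use sub in simp)
  show "h \<otimes>\<^bsub>fun_ring X S\<^esub> f \<in> finsupp_funs X" "f \<otimes>\<^bsub>fun_ring X S\<^esub> h \<in> finsupp_funs X"
    if "f \<in> finsupp_funs X" for f h
  proof -
    have "{x. h x * f x \<noteq> 0} \<subseteq> {x. f x \<noteq> 0}" "{x. f x * h x \<noteq> 0} \<subseteq> {x. f x \<noteq> 0}"
      by auto
    then show "h \<otimes>\<^bsub>fun_ring X S\<^esub> f \<in> finsupp_funs X" "f \<otimes>\<^bsub>fun_ring X S\<^esub> h \<in> finsupp_funs X"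
      using that unfolding finsupp_funs_def by (auto intro: finite_subset)
  qed
qed

lemma one_notin_finsupp_funs:
  assumes "infinite (topspace X)"
  shows "(\<lambda>x. if x \<in> topspace X then 1 else 0) \<notin> finsupp_funs X"
proof -
  have "{x. (if x \<in> topspace X then 1 else 0 :: real) \<noteq> 0} = topspace X"
    by auto
  then show ?thesis
    using assms unfolding finsupp_funs_def by simp
qed

lemma not_fixed_if_finsupp_funs_subset:
  assumes "finsupp_funs X \<subseteq> I"
  shows "\<not> fixed_ideal X I"
proof
  assume "fixed_ideal X I"
  then obtain a where a: "a \<in> (\<Inter>f\<in>I. Zset X f)"
    unfolding fixed_ideal_def by blast
  have "(\<lambda>x. 0) \<in> finsupp_funs X"
    by (simp add: finsupp_funs_def)
  then have "a \<in> Zset X (\<lambda>x. 0)"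
    by (rule INT_D[OF a subsetD[OF assms]])
  then have "indicator {a} \<in> I"
    by (intro subsetD[OF assms indicator_singleton_finsupp_funs]) (simp add: Zset_def)
  then have "a \<in> Zset X (indicator {a})"
    by (rule INT_D[OF a])
  then show False
    unfolding Zset_def by simp
qed
lemma (in ring) exists_maximalideal_superset:
  assumes "ideal I R" "I \<noteq> carrier R"
  shows "\<exists>M. maximalideal M R \<and> I \<subseteq> M"
proof -
  define A where "A = {J. ideal J R \<and> I \<subseteq> J \<and> \<one> \<notin> J}"
  have "I \<in> A"
    using assms ideal.one_imp_carrier unfolding A_def by blast
  then have "\<exists>M\<in>A. \<forall>J\<in>A. M \<subseteq> J \<longrightarrow> J = M"
  proof (intro subset_Zorn_nonempty)
    fix C assume C: "C \<noteq> {}" "subset.chain A C"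
    then have "subset.chain {J. ideal J R} C"
      unfolding A_def subset_chain_def by blast
    then have "ideal (\<Union>C) R"
      using chain_Union_is_ideal[OF \<open>subset.chain {J. ideal J R} C\<close>] C(1) by simp
    then show "\<Union>C \<in> A"
      using C unfolding A_def subset_chain_def by blast
  qed auto
  then obtain M where M: "M \<in> A" and max: "\<forall>J\<in>A. M \<subseteq> J \<longrightarrow> J = M"
    by blast
  have "maximalideal M R"
  proof (rule maximalidealI)
    show "ideal M R" "carrier R \<noteq> M"
      using M unfolding A_def by auto
    show "J = M \<or> J = carrier R" if "ideal J R" "M \<subseteq> J" "J \<subseteq> carrier R" for J
      using that M max ideal.one_imp_carrier unfolding A_def by blast
  qed
  then show ?thesis
    using M unfolding A_def by blast
qed

lemma finite_iff_ideals_fixed: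
  assumes R: "ring (fun_ring X S)" and finsupp: "finsupp_funs X \<subseteq> S"
    and all_funs_if_finite:
      "\<And>f. finite (topspace X) \<Longrightarrow> \<forall>x. x \<notin> topspace X \<longrightarrow> f x = 0 \<Longrightarrow> f \<in> S"
  shows "(finite (topspace X) \<longleftrightarrow> (\<forall>I. ideal I (fun_ring X S) \<and> I \<noteq> S \<longrightarrow> fixed_ideal X I))
       \<and> (finite (topspace X) \<longleftrightarrow> (\<forall>I. maximalideal I (fun_ring X S) \<longrightarrow> fixed_ideal X I))"
proof (cases "finite (topspace X)")
  case True
  have proper_fixed: "\<forall>I. ideal I (fun_ring X S) \<and> I \<noteq> S \<longrightarrow> fixed_ideal X I"
    using proper_ideal_fixed_if_finite[OF True all_funs_if_finite[OF True]] by blast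
  moreover have "\<forall>I. maximalideal I (fun_ring X S) \<longrightarrow> fixed_ideal X I"
  proof (intro allI impI)
    fix I assume "maximalideal I (fun_ring X S)"
    then have "ideal I (fun_ring X S)" "I \<noteq> S"
      using maximalideal.axioms(1) maximalideal.I_notcarr by fastforce+
    then show "fixed_ideal X I"
      using proper_fixed by blast
  qed
  ultimately show ?thesis
    using True by blast
next
  case False
  have ideal: "ideal (finsupp_funs X) (fun_ring X S)"
    by (rule finsupp_funs_ideal[OF R finsupp])
  have "\<one>\<^bsub>fun_ring X S\<^esub> \<in> S - finsupp_funs X"
    using ring.ring_simprules(6)[OF R] one_notin_finsupp_funs[OF False] by simp
  then have proper: "finsupp_funs X \<noteq> S"
    by blast
  then have "\<not> (\<forall>I. ideal I (fun_ring X S) \<and> I \<noteq> S \<longrightarrow> fixed_ideal X I)"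
    using ideal not_fixed_if_finsupp_funs_subset[of X "finsupp_funs X"] by blast
  moreover obtain M where "maximalideal M (fun_ring X S)" "finsupp_funs X \<subseteq> M"
    using ring.exists_maximalideal_superset[OF R ideal] proper by auto
  then have "\<not> (\<forall>I. maximalideal I (fun_ring X S) \<longrightarrow> fixed_ideal X I)"
    using not_fixed_if_finsupp_funs_subset by blast
  ultimately show ?thesis
    using False by blast
qed

lemma Inter_mem_if_Int_closed:
  assumes "finite G" "G \<noteq> {}" "G \<subseteq> F" and Int_closed: "\<And>A B. A \<in> F \<Longrightarrow> B \<in> F \<Longrightarrow> A \<inter> B \<in> F"
  shows "\<Inter>G \<in> F"
  using assms(1-3) by (induction G rule: finite_ne_induct) (auto intro: Int_closed)

lemma ZcF_filter_fixed_if_finite: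
  assumes fin: "finite (topspace X)" and F: "ZcF_filter X F"
  shows "fixed_filter F"
proof -
  have "F \<subseteq> Pow (topspace X)"
    using F unfolding ZcF_filter_def ZCcF_def Zset_def by auto
  then have "finite F"
    using fin by (meson finite_Pow_iff finite_subset)
  then have "\<Inter>F \<in> F"
    using F unfolding ZcF_filter_def by (intro Inter_mem_if_Int_closed) auto
  then show ?thesis
    using F unfolding ZcF_filter_def fixed_filter_def by metis
qed

lemma topspace_in_ZCcF: "topspace X \<in> ZCcF X"
proof -
  have "topspace X = Zset X (\<lambda>x. 0)"
    unfolding Zset_def by simp
  then show ?thesis
    unfolding ZCcF_def using CcF_zero by blast
qed

lemma ZCcF_Int:
  assumes "A \<in> ZCcF X" "B \<in> ZCcF X"
  shows "A \<inter> B \<in> ZCcF X"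
proof -
  obtain f g where f: "f \<in> CcF X" "A = Zset X f" and g: "g \<in> CcF X" "B = Zset X g"
    using assms unfolding ZCcF_def by blast
  have "(\<lambda>x. f x * f x + g x * g x) \<in> CcF X"
    using f g by (intro CcF_add CcF_mult)
  moreover have "A \<inter> B = Zset X (\<lambda>x. f x * f x + g x * g x)"
    unfolding f g Zset_def by (auto simp: sum_squares_eq_zero_iff)
  ultimately show ?thesis
    unfolding ZCcF_def by blast
qed

lemma topspace_minus_singleton_in_ZCcF:
  assumes "t1_space X" "a \<in> topspace X"
  shows "topspace X - {a} \<in> ZCcF X"
proof -
  have "indicator {a} \<in> CcF X"
    using indicator_singleton_finsupp_funs[OF assms(2)] finsupp_funs_subset_CcF_bdd[OF assms(1)]
      CcF_bdd_subset_CcF by blast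
  moreover have "topspace X - {a} = Zset X (indicator {a})"
    unfolding Zset_def by auto
  ultimately show ?thesis
    unfolding ZCcF_def by blast
qed

definition cofinite_ZCcF :: "'a topology \<Rightarrow> 'a set set" where
  "cofinite_ZCcF X = {Z \<in> ZCcF X. finite (topspace X - Z)}"

lemma ZcF_filter_cofinite_ZCcF:
  assumes "infinite (topspace X)"
  shows "ZcF_filter X (cofinite_ZCcF X)"
  unfolding ZcF_filter_def
proof (intro conjI ballI impI)
  show "cofinite_ZCcF X \<noteq> {}" "cofinite_ZCcF X \<subseteq> ZCcF X"
    using topspace_in_ZCcF[of X] unfolding cofinite_ZCcF_def by auto
  show "{} \<notin> cofinite_ZCcF X"
    using assms unfolding cofinite_ZCcF_def by simp
  fix A assume A: "A \<in> cofinite_ZCcF X"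
  show "A \<inter> B \<in> cofinite_ZCcF X" if B: "B \<in> cofinite_ZCcF X" for B
  proof -
    have "topspace X - A \<inter> B = (topspace X - A) \<union> (topspace X - B)"
      by blast
    then show ?thesis
      using A B ZCcF_Int unfolding cofinite_ZCcF_def by auto
  qed
  show "B \<in> cofinite_ZCcF X" if "B \<in> ZCcF X" "A \<subseteq> B" for B
    using A that finite_subset[of "topspace X - B" "topspace X - A"]
    unfolding cofinite_ZCcF_def by blast
qed

lemma Inter_empty_if_cofinite_ZCcF_subset:
  assumes "t1_space X" "cofinite_ZCcF X \<subseteq> F"
  shows "\<Inter>F = {}"
proof (rule equals0I)
  fix a assume a: "a \<in> \<Inter>F"
  have "topspace X \<in> F"
    using assms(2) topspace_in_ZCcF[of X] unfolding cofinite_ZCcF_def by auto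
  then have "a \<in> topspace X"
    using a by blast
  then have "topspace X - {a} \<in> cofinite_ZCcF X"
    using topspace_minus_singleton_in_ZCcF[OF assms(1)] unfolding cofinite_ZCcF_def
    by (simp add: Diff_Diff_Int)
  then have "topspace X - {a} \<in> F"
    using assms(2) by blast
  then show False
    using a by blast
qed

lemma ZcF_filter_chain_Union:
  assumes "C \<noteq> {}" and filters: "\<And>G. G \<in> C \<Longrightarrow> ZcF_filter X G"
    and chain: "\<And>G H. G \<in> C \<Longrightarrow> H \<in> C \<Longrightarrow> G \<subseteq> H \<or> H \<subseteq> G"
  shows "ZcF_filter X (\<Union>C)"
  unfolding ZcF_filter_def
proof (intro conjI ballI impI)
  show "\<Union>C \<noteq> {}" "\<Union>C \<subseteq> ZCcF X" "{} \<notin> \<Union>C"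
    using assms(1) filters unfolding ZcF_filter_def by blast+
  fix A assume "A \<in> \<Union>C"
  then obtain G where G: "G \<in> C" "A \<in> G"
    by blast
  show "B \<in> \<Union>C" if "B \<in> ZCcF X" "A \<subseteq> B" for B
    using filters[OF G(1)] G that unfolding ZcF_filter_def by blast
  show "A \<inter> B \<in> \<Union>C" if B: "B \<in> \<Union>C" for B
  proof -
    obtain H where H: "H \<in> C" "B \<in> H"
      using B by blast
    then obtain K where "K \<in> C" "A \<in> K" "B \<in> K"
      using chain[OF G(1) H(1)] G by blast
    then show ?thesis
      using filters unfolding ZcF_filter_def by blast
  qed
qed

lemma exists_ZcF_ultrafilter_superset:
  assumes "ZcF_filter X F"
  shows "\<exists>U. ZcF_ultrafilter X U \<and> F \<subseteq> U"
proof -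
  define A where "A = {G. ZcF_filter X G \<and> F \<subseteq> G}"
  have "\<exists>U\<in>A. \<forall>G\<in>A. U \<subseteq> G \<longrightarrow> G = U"
  proof (rule subset_Zorn_nonempty)
    show "A \<noteq> {}"
      using assms unfolding A_def by blast
    fix C assume C: "C \<noteq> {}" "subset.chain A C"
    then have sub: "C \<subseteq> A" and chain: "\<forall>G\<in>C. \<forall>H\<in>C. G \<subseteq> H \<or> H \<subseteq> G"
      unfolding subset_chain_def by auto
    have "ZcF_filter X (\<Union>C)"
    proof (rule ZcF_filter_chain_Union[OF C(1)])
      show "ZcF_filter X G" if "G \<in> C" for G
        using that sub unfolding A_def by blast
      show "G \<subseteq> H \<or> H \<subseteq> G" if "G \<in> C" "H \<in> C" for G H
        using that chain by blast
    qed
    moreover have "F \<subseteq> \<Union>C"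
      using C(1) sub unfolding A_def by blast
    ultimately show "\<Union>C \<in> A"
      unfolding A_def by blast
  qed
  then obtain U where "U \<in> A" and max: "\<forall>G\<in>A. U \<subseteq> G \<longrightarrow> G = U"
    by blast
  then have U: "ZcF_filter X U" "F \<subseteq> U"
    unfolding A_def by auto
  have "ZcF_ultrafilter X U"
    unfolding ZcF_ultrafilter_def
  proof (intro conjI allI impI)
    show "ZcF_filter X U"
      by (fact U(1))
    fix G assume G: "ZcF_filter X G \<and> U \<subseteq> G"
    then have "G \<in> A"
      using U(2) unfolding A_def by auto
    then show "G = U"
      using max G by blast
  qed
  then show ?thesis
    using U(2) by blast
qed

lemma finite_iff_ZcF_filters_fixed:
  assumes "t1_space X"
  shows "(finite (topspace X) \<longleftrightarrow> (\<forall>\<F>. ZcF_filter X \<F> \<longrightarrow> fixed_filter \<F>))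
       \<and> (finite (topspace X) \<longleftrightarrow> (\<forall>\<F>. ZcF_ultrafilter X \<F> \<longrightarrow> fixed_filter \<F>))"
proof (cases "finite (topspace X)")
  case True
  then show ?thesis
    using ZcF_filter_fixed_if_finite[OF True] unfolding ZcF_ultrafilter_def by blast
next
  case False
  have filter: "ZcF_filter X (cofinite_ZCcF X)"
    by (rule ZcF_filter_cofinite_ZCcF[OF False])
  then obtain U where U: "ZcF_ultrafilter X U" "cofinite_ZCcF X \<subseteq> U"
    using exists_ZcF_ultrafilter_superset by blast
  have "\<not> fixed_filter (cofinite_ZCcF X)" "\<not> fixed_filter U"
    using Inter_empty_if_cofinite_ZCcF_subset[OF assms] U(2) unfolding fixed_filter_def by auto
  then show ?thesis
    using False U(1) filter by blast
qed

theorem theorem3p13: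
  fixes X :: "'a topology"
  assumes "t1_space X"
  shows "(finite (topspace X) \<longleftrightarrow>
            (\<forall>I. ideal I (fun_ring X (CcF X)) \<and> I \<noteq> CcF X \<longrightarrow> fixed_ideal X I))
       \<and> (finite (topspace X) \<longleftrightarrow>
            (\<forall>I. ideal I (fun_ring X (CcF_bdd X)) \<and> I \<noteq> CcF_bdd X \<longrightarrow> fixed_ideal X I))
       \<and> (finite (topspace X) \<longleftrightarrow>
            (\<forall>I. maximalideal I (fun_ring X (CcF X)) \<longrightarrow> fixed_ideal X I))
       \<and> (finite (topspace X) \<longleftrightarrow>
            (\<forall>I. maximalideal I (fun_ring X (CcF_bdd X)) \<longrightarrow> fixed_ideal X I))
       \<and> (finite (topspace X) \<longleftrightarrow> (\<forall>\<F>. ZcF_filter X \<F> \<longrightarrow> fixed_filter \<F>))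
       \<and> (finite (topspace X) \<longleftrightarrow> (\<forall>\<F>. ZcF_ultrafilter X \<F> \<longrightarrow> fixed_filter \<F>))"
proof -
  have finsupp: "finsupp_funs X \<subseteq> CcF_bdd X" "finsupp_funs X \<subseteq> CcF X"
    using finsupp_funs_subset_CcF_bdd[OF assms] CcF_bdd_subset_CcF by auto
  have all_funs: "f \<in> CcF_bdd X" "f \<in> CcF X"
    if "finite (topspace X)" "\<forall>x. x \<notin> topspace X \<longrightarrow> f x = 0" for f
    using CcF_bdd_if_finite[OF that] CcF_bdd_subset_CcF by auto
  show ?thesis
    using finite_iff_ideals_fixed[OF ring_CcF finsupp(2) all_funs(2)]
      finite_iff_ideals_fixed[OF ring_CcF_bdd finsupp(1) all_funs(1)]
      finite_iff_ZcF_filters_fixed[OF assms]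
    by blast
qed

end
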